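(* Let $K\ge3$, $p\in(0,1)$ and $f\in\mathcal M_p$ with $\sigma_f$ the identity. Then for every $r\in\{2,\dots,K-1\}$, $$\sum_{i=1}^{r-1}\Big(f([K-r+1]\mid[K-i+1])-(K-r+1)\,f(K-r+2\mid[K-i+1])\Big)D(f,i)=1,$$ and consequently $$D(f,r)=\frac{1-\sum_{i=1}^{r-1}\big(f([K-r]\mid[K-i+1])-(K-r)f(K-r+1\mid[K-i+1])\big)D(f,i)}{1-(K-r+1)f(K-r+1\mid[K-r+1])}.$$
   Context: Items are $[K]=\{1,\dots,K\}$, $\mathcal S=\{S\subseteq[K]:|S|\ge2\}$, $[n]=\{1,\dots,n\}$. A preference $f$ is a family of numbers $f(i\mid S)$, $S\in\mathcal S$, $i\in[K]$; for $S'\subseteq S$, $f(S'\mid S)=\sum_{i\in S'}f(i\mid S)$. For $p\in(0,1)$, $\mathcal M_p$ consists of all $f$ with (i) $f(i\mid S)>0$ iff $i\in S$; (ii) $\sum_{i\in S}f(i\mid S)=1$; (iii) a bijection $\sigma_f:[K]\to[K]$ such that $f(i\mid S)\le pf(i'\mid S)$ for $i,i'\in S$ with $\sigma_f(i')<\sigma_f(i)$. Define $\Delta^i_{K-r+1}=f(K-r+1\mid[K-i+1])-f(K-r+2\mid[K-i+1])$ for $r\in[K-1]$, $i\in[r-1]$; $D(f,1)=\frac{1}{1-Kf(K\mid[K])}$; for $r\in\{2,\dots,K-1\}$, $D(f,r)=\frac{(K-r+1)\sum_{i=1}^{r-1}\Delta^i_{K-r+1}D(f,i)}{1-(K-r+1)f(K-r+1\mid[K-r+1])}$.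 *)

theory Defs
  imports Complex_Main
begin

(* A preference f on items [K] = {1..K}: f i S is f(i|S). *)
type_synonym pref = "nat \<Rightarrow> nat set \<Rightarrow> real"

definition menus :: "nat \<Rightarrow> nat set set" where
  "menus K = {S. S \<subseteq> {1..K} \<and> card S \<ge> 2}"

definition fset :: "pref \<Rightarrow> nat set \<Rightarrow> nat set \<Rightarrow> real" where
  "fset f S' S = (\<Sum>i\<in>S'. f i S)"

(* Conditions (i)-(iii) of M_p, with a given bijection sigma as sigma_f. *)
definition Mp_with :: "nat \<Rightarrow> real \<Rightarrow> (nat \<Rightarrow> nat) \<Rightarrow> pref \<Rightarrow> bool" where
  "Mp_with K p \<sigma> f \<longleftrightarrow>
     bij_betw \<sigma> {1..K} {1..K} \<and>
     (\<forall>S\<in>menus K. \<forall>i\<in>{1..K}. (f i S > 0 \<longleftrightarrow> i \<in> S)) \<and>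
     (\<forall>S\<in>menus K. (\<Sum>i\<in>S. f i S) = 1) \<and>
     (\<forall>S\<in>menus K. \<forall>i\<in>S. \<forall>i'\<in>S. \<sigma> i' < \<sigma> i \<longrightarrow> f i S \<le> p * f i' S)"

definition Mp :: "nat \<Rightarrow> real \<Rightarrow> pref \<Rightarrow> bool" where
  "Mp K p f \<longleftrightarrow> (\<exists>\<sigma>. Mp_with K p \<sigma> f)"

(* \<Delta>^i_{K-r+1} = f(K-r+1 | [K-i+1]) - f(K-r+2 | [K-i+1]) *)
definition Delta :: "nat \<Rightarrow> pref \<Rightarrow> nat \<Rightarrow> nat \<Rightarrow> real" where
  "Delta K f i r = f (K - r + 1) {1..K - i + 1} - f (K - r + 2) {1..K - i + 1}"

(* D(f,r), defined for r \<in> [K-1]; D(f,1) = 1/(1 - K f(K|[K])). *)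
function D :: "nat \<Rightarrow> pref \<Rightarrow> nat \<Rightarrow> real" where
  "D K f r =
     (if r \<le> 1 then 1 / (1 - real K * f K {1..K})
      else (real (K - r + 1) * (\<Sum>i\<in>{1..r-1}. Delta K f i r * D K f i))
           / (1 - real (K - r + 1) * f (K - r + 1) {1..K - r + 1}))"
  by pat_completeness auto
termination
  by (relation "measure (\<lambda>(K, f, r). r)") auto

end

theory Submission
  imports Defs
begin

text \<open>
  Write \<open>W(m | S) = f([m] | S) - m f(m+1 | S)\<close> (\<open>D_weight\<close> below). Moving item \<open>K-r+1\<close> out of the prefix \<open>[K-r+1]\<close>
  gives \<open>W(K-r+1 | S) = W(K-r | S) + (K-r+1) \<Delta>\<close>, so by the defining recursion of \<open>D(f,r)\<close>
  the sum \<open>\<Sigma>\<^sub>i W(K-r | [K-i+1]) D(f,i)\<close> over \<open>i < r\<close> equals the same sum with \<open>W(K-r+1 | \<cdot>)\<close>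
  minus \<open>D(f,r)\<close> times its denominator. On the diagonal \<open>i = r\<close> normalisation of
  \<open>f(\<cdot> | [K-r+1])\<close> makes \<open>W(K-r | [K-r+1])\<close> equal to exactly that denominator, so the sum
  \<open>\<Sigma>\<^sub>i W(K-r+1 | [K-i+1]) D(f,i) = 1\<close> propagates from \<open>r\<close> to \<open>r+1\<close>; it starts at \<open>r = 2\<close>
  because \<open>W(K-1 | [K]) = 1/D(f,1)\<close>. The denominators are positive since under the identity
  order the last item of \<open>[m]\<close> is strictly the least likely, whence \<open>m f(m | [m]) < 1\<close>.
\<close>

declare D.simps [simp del]

definition D_weight :: "pref \<Rightarrow> nat \<Rightarrow> nat set \<Rightarrow> real" where
  "D_weight f m S = fset f {1..m} S - real m * f (m + 1) S"

lemma fset_atLeastAtMost_Suc: "fset f {1..Suc m} S = fset f {1..m} S + f (Suc m) S"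
  unfolding fset_def by (simp add: sum.cl_ivl_Suc)

lemma D_weight_Suc:
  "D_weight f (Suc m) S = D_weight f m S + real (Suc m) * (f (Suc m) S - f (Suc m + 1) S)"
  unfolding D_weight_def fset_atLeastAtMost_Suc by (simp add: algebra_simps)

lemma D_weight_diagonal:
  assumes "fset f {1..Suc m} {1..Suc m} = 1"
  shows "D_weight f m {1..Suc m} = 1 - real (Suc m) * f (Suc m) {1..Suc m}"
  using assms unfolding D_weight_def fset_atLeastAtMost_Suc by (simp add: algebra_simps)

lemma card_mult_strict_min_less_sum:
  fixes g :: "'a \<Rightarrow> real"
  assumes "finite A" "a \<in> A" "A \<noteq> {a}" "\<And>i. i \<in> A - {a} \<Longrightarrow> g a < g i"
  shows "real (card A) * g a < sum g A"
proof -
  have "real (card (A - {a})) * g a = (\<Sum>i\<in>A - {a}. g a)" by simp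
  also have "\<dots> < sum g (A - {a})"
    using assms by (intro sum_strict_mono) auto
  finally have "real (card (A - {a})) * g a < sum g (A - {a})" .
  moreover have "card A = Suc (card (A - {a}))"
    using assms(1,2) by (rule card_Suc_Diff1[symmetric])
  moreover have "sum g A = g a + sum g (A - {a})"
    using assms(1,2) by (simp add: sum.remove)
  ultimately show ?thesis by (simp add: algebra_simps)
qed

lemma initial_segment_menu: "2 \<le> m \<Longrightarrow> m \<le> K \<Longrightarrow> {1..m} \<in> menus K"
  by (auto simp: menus_def)

lemma Mp_with_fset_initial_segment:
  assumes "Mp_with K p \<sigma> f" "2 \<le> m" "m \<le> K"
  shows "fset f {1..m} {1..m} = 1"
  using assms initial_segment_menu unfolding Mp_with_def fset_def by blast

lemma Mp_with_id_last_prob_bound: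
  assumes M: "Mp_with K p id f" and "p < 1" "2 \<le> m" "m \<le> K"
  shows "real m * f m {1..m} < 1"
proof -
  have S: "{1..m} \<in> menus K" using assms initial_segment_menu by blast
  have "f m {1..m} < f i {1..m}" if i: "i \<in> {1..m} - {m}" for i
  proof -
    have "0 < f i {1..m}" using M S i \<open>m \<le> K\<close> unfolding Mp_with_def by auto
    moreover have "f m {1..m} \<le> p * f i {1..m}"
      using M S i \<open>2 \<le> m\<close> unfolding Mp_with_def by auto
    ultimately show ?thesis using \<open>p < 1\<close> by (smt (verit) mult_less_cancel_right2)
  qed
  then have "real (card {1..m}) * f m {1..m} < (\<Sum>i\<in>{1..m}. f i {1..m})"
    using \<open>2 \<le> m\<close> by (intro card_mult_strict_min_less_sum) auto
  with Mp_with_fset_initial_segment[OF M \<open>2 \<le> m\<close> \<open>m \<le> K\<close>] show ?thesis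
    by (simp add: fset_def)
qed

lemma sum_D_weight_step:
  assumes "2 \<le> r" "r < K" and denom: "real (K - r + 1) * f (K - r + 1) {1..K - r + 1} \<noteq> 1"
  shows "(\<Sum>i\<in>{1..r-1}. D_weight f (K - r) {1..K-i+1} * D K f i)
       = (\<Sum>i\<in>{1..r-1}. D_weight f (K - r + 1) {1..K-i+1} * D K f i)
         - D K f r * (1 - real (K - r + 1) * f (K - r + 1) {1..K - r + 1})"
proof -
  let ?c = "real (K - r + 1)"
  have "D_weight f (K - r + 1) S = D_weight f (K - r) S + ?c * (f (K - r + 1) S - f (K - r + 2) S)"
    for S
    using D_weight_Suc[of f "K - r" S] by simp
  then have "D_weight f (K - r + 1) {1..K-i+1} * D K f i
      = D_weight f (K - r) {1..K-i+1} * D K f i + ?c * (Delta K f i r * D K f i)" for i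
    unfolding Delta_def by (simp only: distrib_right mult.assoc)
  then have "(\<Sum>i\<in>{1..r-1}. D_weight f (K - r + 1) {1..K-i+1} * D K f i)
      = (\<Sum>i\<in>{1..r-1}. D_weight f (K - r) {1..K-i+1} * D K f i)
        + ?c * (\<Sum>i\<in>{1..r-1}. Delta K f i r * D K f i)"
    by (simp add: sum.distrib sum_distrib_left)
  moreover have "D K f r * (1 - ?c * f (K - r + 1) {1..K - r + 1})
      = ?c * (\<Sum>i\<in>{1..r-1}. Delta K f i r * D K f i)"
    using D.simps[of K f r] \<open>2 \<le> r\<close> denom by simp
  ultimately show ?thesis by simp
qed

context
  fixes K :: nat and f :: pref
  assumes normalised: "\<And>m. 2 \<le> m \<Longrightarrow> m \<le> K \<Longrightarrow> fset f {1..m} {1..m} = 1"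
    and nondegenerate: "\<And>m. 2 \<le> m \<Longrightarrow> m \<le> K \<Longrightarrow> real m * f m {1..m} \<noteq> 1"
begin

lemma sum_D_weight_D_eq_1:
  assumes "2 \<le> r" "r < K"
  shows "(\<Sum>i\<in>{1..r-1}. D_weight f (K - r + 1) {1..K-i+1} * D K f i) = 1"
  using assms
proof (induction r rule: nat_induct_at_least)
  case base
  have "D_weight f (K - 1) {1..K} = 1 - real K * f K {1..K}"
    using D_weight_diagonal[of f "K - 1"] normalised[of K] base by simp
  moreover have "real K * f K {1..K} \<noteq> 1" using nondegenerate base by simp
  moreover have "K - 2 + 1 = K - 1" using base by simp
  ultimately show ?case using D.simps[of K f 1] by simp
next
  case (Suc r)
  have diagonal: "D_weight f (K - r) {1..K - r + 1} = 1 - real (K - r + 1) * f (K - r + 1) {1..K - r + 1}"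
    using D_weight_diagonal[of f "K - r"] normalised[of "K - r + 1"] Suc by simp
  have "(\<Sum>i\<in>{1..r}. D_weight f (K - Suc r + 1) {1..K-i+1} * D K f i)
      = D_weight f (K - r) {1..K - r + 1} * D K f r
        + (\<Sum>i\<in>{1..r-1}. D_weight f (K - r) {1..K-i+1} * D K f i)"
  proof -
    have "{1..r} = insert r {1..r-1}" using Suc by auto
    moreover have "K - Suc r + 1 = K - r" using Suc by simp
    ultimately show ?thesis using Suc by simp
  qed
  also have "\<dots> = 1"
    using sum_D_weight_step[of r K f] Suc diagonal nondegenerate[of "K - r + 1"] by simp
  finally show ?case by simp
qed

lemma D_recursion:
  assumes "2 \<le> r" "r < K"
  shows "D K f r = (1 - (\<Sum>i\<in>{1..r-1}. D_weight f (K - r) {1..K-i+1} * D K f i))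
                   / (1 - real (K - r + 1) * f (K - r + 1) {1..K - r + 1})"
proof -
  have "1 - (\<Sum>i\<in>{1..r-1}. D_weight f (K - r) {1..K-i+1} * D K f i)
      = D K f r * (1 - real (K - r + 1) * f (K - r + 1) {1..K - r + 1})"
    using sum_D_weight_step[of r K f] sum_D_weight_D_eq_1[of r] nondegenerate[of "K - r + 1"] assms
    by simp
  then show ?thesis
    using nondegenerate[of "K - r + 1"] assms by simp
qed

end

theorem mainTheorem7:
  fixes K :: nat and p :: real and f :: pref
  assumes "K \<ge> 3" and "0 < p" and "p < 1"
    and "Mp_with K p id f"
  shows "\<forall>r\<in>{2..K-1}.
      (\<Sum>i\<in>{1..r-1}. (fset f {1..K-r+1} {1..K-i+1}
            - real (K - r + 1) * f (K - r + 2) {1..K-i+1}) * D K f i) = 1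
    \<and> D K f r =
      (1 - (\<Sum>i\<in>{1..r-1}. (fset f {1..K-r} {1..K-i+1}
            - real (K - r) * f (K - r + 1) {1..K-i+1}) * D K f i))
      / (1 - real (K - r + 1) * f (K - r + 1) {1..K-r+1})"
proof -
  have normalised: "fset f {1..m} {1..m} = 1" if "2 \<le> m" "m \<le> K" for m
    using Mp_with_fset_initial_segment assms(4) that .
  have nondegenerate: "real m * f m {1..m} \<noteq> 1" if "2 \<le> m" "m \<le> K" for m
    using Mp_with_id_last_prob_bound[OF assms(4) assms(3) that] by simp
  show ?thesis
    using sum_D_weight_D_eq_1[OF normalised nondegenerate]
      D_recursion[OF normalised nondegenerate]
    unfolding D_weight_def by auto
qed

end
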